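(* Let $\mathcal{U}$ be a separable Banach space with dual $\mathcal{U}^*$ and duality pairing $[\cdot,\cdot]$, with quadratic norm $\|u\|^2=[\mathcal{K}^{-1}u,u]$ given by an invertible symmetric positive linear map $\mathcal{K}:\mathcal{U}^*\to\mathcal{U}$. Let $\Omega\subseteq\mathbb{R}^d$ be bounded, consider the PDE $\mathcal{P}(u)(\mathbf{x})=f(\mathbf{x})$ for $\mathbf{x}\in\Omega$, $\mathcal{B}(u)(\mathbf{x})=g(\mathbf{x})$ for $\mathbf{x}\in\partial\Omega$, and suppose (Assumption) there exist bounded linear operators $L_1,\dots,L_Q\in\mathcal{L}(\mathcal{U};C(\Omega))$ with $L_1,\dots,L_{Q_b}\in\mathcal{L}(\mathcal{U};C(\partial\Omega))$ for some $1\le Q_b\le Q$, and maps $P:\mathbb{R}^Q\to\mathbb{R}$, $B:\mathbb{R}^{Q_b}\to\mathbb{R}$ (possibly nonlinear) with $\mathcal{P}(u)(\mathbf{x})=P(L_1(u)(\mathbf{x}),\dots,L_Q(u)(\mathbf{x}))$ for $\mathbf{x}\in\Omega$ and $\mathcal{B}(u)(\mathbf{x})=B(L_1(u)(\mathbf{x}),\dots,L_{Q_b}(u)(\mathbf{x}))$ for $\mathbf{x}\in\partial\Omega$. With collocation points, $\boldsymbol{\phi}$, $N$, $\mathbf{y}$, $F$, $\Theta$ and $\chi_n$ as in the context, assume $\Theta$ is invertible. Then $u^\dagger$ is a minimizer of $$\min_{u\in\mathcal{U}}\|u\|\ \text{ s.t. }\ \mathcal{P}(u)(\mathbf{x}_m)=f(\mathbf{x}_m),\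 m=1,\dots,M_\Omega;\quad \mathcal{B}(u)(\mathbf{x}_m)=g(\mathbf{x}_m),\ m=M_\Omega+1,\dots,M,$$ if and only if $u^\dagger=\sum_{n=1}^N z^\dagger_n\chi_n$ where $\mathbf{z}^\dagger$ is a minimizer of $\min_{\mathbf{z}\in\mathbb{R}^N}\mathbf{z}^T\Theta^{-1}\mathbf{z}$ subject to $F(\mathbf{z})=\mathbf{y}$.
   Context: Collocation points: $\mathbf{x}_1,\dots,\mathbf{x}_{M_\Omega}\in\Omega$, $\mathbf{x}_{M_\Omega+1},\dots,\mathbf{x}_M\in\partial\Omega$. Define $\phi^{(q)}_m=\delta_{\mathbf{x}_m}\circ L_q\in\mathcal{U}^*$ for $1\le m\le M$ if $1\le q\le Q_b$, and for $1\le m\le M_\Omega$ if $Q_b<q\le Q$; let $\boldsymbol{\phi}^{(q)}$ be the vector of the $\phi^{(q)}_m$ and $\boldsymbol{\phi}=(\boldsymbol{\phi}^{(1)},\dots,\boldsymbol{\phi}^{(Q)})\in(\mathcal{U}^* )^{N}$ with $N=MQ_b+M_\Omega(Q-Q_b)$. $\mathbf{y}\in\mathbb{R}^M$ has $y_m=f(\mathbf{x}_m)$ for $m\le M_\Omega$ and $y_m=g(\mathbf{x}_m)$ for $m>M_\Omega$. $F:\mathbb{R}^N\to\mathbb{R}^M$ is defined by $(F([\boldsymbol{\phi},u]))_m=P([\phi^{(1)}_m,u],\dots,[\phi^{(Q)}_m,u])$ for $m\le M_\Omega$ and $=B([\phi^{(1)}_m,u],\dots,[\phi^{(Q_b)}_m,u])$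 for $m>M_\Omega$ (i.e. $F$ acts on $\mathbf{z}\in\mathbb{R}^N$ with entries indexed like $\boldsymbol{\phi}$). $\Theta_{i,n}=[\phi_i,\mathcal{K}\phi_n]$ where $\phi_i$ are the entries of $\boldsymbol{\phi}$, and the gamblets are $\chi_i=\sum_{n=1}^N(\Theta^{-1})_{i,n}\mathcal{K}\phi_n$. The constraints of the minimization problem are thus equivalent to $F([\boldsymbol{\phi},u])=\mathbf{y}$. *)

theory Defs
  imports "HOL-Analysis.Analysis"
begin

text \<open>Index set of the measurement functionals: the pair (q,m) stands for
  phi^(q)_m = delta_{x_m} o L_q; q ranges over 1..Q_b with m in 1..M, and
  over Q_b+1..Q with m in 1..M_Omega. Its cardinality is N = M Q_b + M_Omega (Q - Q_b).\<close>
definition colloc_idx :: "nat \<Rightarrow> nat \<Rightarrow> nat \<Rightarrow> nat \<Rightarrow> (nat \<times> nat) set" where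
  "colloc_idx Q Qb M MO =
     {(q, m). (1 \<le> q \<and> q \<le> Qb \<and> 1 \<le> m \<and> m \<le> M) \<or> (Qb < q \<and> q \<le> Q \<and> 1 \<le> m \<and> m \<le> MO)}"

definition colloc_phi ::
  "(nat \<Rightarrow> 'u::real_normed_vector \<Rightarrow> 'x \<Rightarrow> real) \<Rightarrow> (nat \<Rightarrow> 'x) \<Rightarrow> nat \<times> nat \<Rightarrow> ('u \<Rightarrow>\<^sub>L real)" where
  "colloc_phi L X = (\<lambda>(q, m). Blinfun (\<lambda>u. L q u (X m)))"

definition Theta :: "(('u::real_normed_vector \<Rightarrow>\<^sub>L real) \<Rightarrow> 'u) \<Rightarrow> ('i \<Rightarrow> ('u \<Rightarrow>\<^sub>L real)) \<Rightarrow> 'i \<Rightarrow> 'i \<Rightarrow> real" where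
  "Theta K phi i n = blinfun_apply (phi i) (K (phi n))"

definition gamblet ::
  "'i set \<Rightarrow> (('u::real_normed_vector \<Rightarrow>\<^sub>L real) \<Rightarrow> 'u) \<Rightarrow> ('i \<Rightarrow> ('u \<Rightarrow>\<^sub>L real)) \<Rightarrow> ('i \<Rightarrow> 'i \<Rightarrow> real) \<Rightarrow> 'i \<Rightarrow> 'u" where
  "gamblet I K phi Thinv i = (\<Sum>n\<in>I. Thinv i n *\<^sub>R K (phi n))"

definition quad_form :: "'i set \<Rightarrow> ('i \<Rightarrow> 'i \<Rightarrow> real) \<Rightarrow> ('i \<Rightarrow> real) \<Rightarrow> real" where
  "quad_form I A z = (\<Sum>i\<in>I. \<Sum>j\<in>I. z i * A i j * z j)"

definition Fmap ::
  "(real list \<Rightarrow> real) \<Rightarrow> (real list \<Rightarrow> real) \<Rightarrow> nat \<Rightarrow> nat \<Rightarrow> nat \<Rightarrow> (nat \<times> nat \<Rightarrow> real) \<Rightarrow> nat \<Rightarrow> real" where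
  "Fmap P B Q Qb MO z m =
     (if m \<le> MO then P (map (\<lambda>q. z (q, m)) [1..<Q+1]) else B (map (\<lambda>q. z (q, m)) [1..<Qb+1]))"

definition ydata :: "('x \<Rightarrow> real) \<Rightarrow> ('x \<Rightarrow> real) \<Rightarrow> (nat \<Rightarrow> 'x) \<Rightarrow> nat \<Rightarrow> nat \<Rightarrow> real" where
  "ydata f g X MO m = (if m \<le> MO then f (X m) else g (X m))"

definition F_eq_y ::
  "(real list \<Rightarrow> real) \<Rightarrow> (real list \<Rightarrow> real) \<Rightarrow> nat \<Rightarrow> nat \<Rightarrow> nat \<Rightarrow> nat \<Rightarrow> (nat \<Rightarrow> real) \<Rightarrow> (nat \<times> nat \<Rightarrow> real) \<Rightarrow> bool" where
  "F_eq_y P B Q Qb M MO y z \<longleftrightarrow> (\<forall>m\<in>{1..M}. Fmap P B Q Qb MO z m = y m)"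

end

theory Submission
  imports Defs
begin

text \<open>The gamblet combination \<open>U z = \<Sum>\<^sub>n z\<^sub>n \<chi>\<^sub>n\<close> (\<open>interpolant z\<close>) is \<open>\<K> \<psi>\<close> for
  \<open>\<psi> = \<Sum>\<^sub>n \<Sum>\<^sub>k z\<^sub>n (\<Theta>\<^sup>-\<^sup>1)\<^sub>n\<^sub>k \<phi>\<^sub>k\<close> (\<open>dual_coeffs z\<close>); hence it interpolates the data,
  \<open>\<phi>\<^sub>i(U z) = z\<^sub>i\<close>, and \<open>\<parallel>U z\<parallel>\<^sup>2 = z\<^sup>T \<Theta>\<^sup>-\<^sup>1 z\<close>. For any \<open>u\<close>, the residual
  \<open>w = u - U(\<phi>(u))\<close> is annihilated by every \<open>\<phi>\<^sub>i\<close>, hence orthogonal to \<open>U(\<phi>(u))\<close> in the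
  inner product induced by \<open>\<K>\<^sup>-\<^sup>1\<close>, so \<open>\<parallel>u\<parallel>\<^sup>2 = \<phi>(u)\<^sup>T \<Theta>\<^sup>-\<^sup>1 \<phi>(u) + \<parallel>w\<parallel>\<^sup>2\<close>.
  The collocation constraints depend on \<open>u\<close> only through \<open>\<phi>(u)\<close>, where they read
  \<open>F(\<phi>(u)) = y\<close>; so a minimal norm solution has \<open>w = 0\<close>, and the two minimisation
  problems correspond under \<open>z \<mapsto> U z\<close>.\<close>

locale kernel_norm =
  fixes K :: "('u::real_normed_vector \<Rightarrow>\<^sub>L real) \<Rightarrow> 'u"
  assumes K_linear: "linear K" and K_bij: "bij K"
    and K_sym: "\<And>\<phi> \<psi>. blinfun_apply \<phi> (K \<psi>) = blinfun_apply \<psi> (K \<phi>)"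
    and K_norm: "\<And>u. (norm u)\<^sup>2 = blinfun_apply (inv K u) u"
begin

lemma inv_K_K [simp]: "inv K (K \<phi>) = \<phi>"
  using K_bij by (simp add: bij_is_inj)

lemma K_inv_K [simp]: "K (inv K u) = u"
  using K_bij by (simp add: bij_is_surj surj_f_inv_f)

lemma norm_K_add_orthogonal:
  assumes "blinfun_apply \<psi> w = 0"
  shows "(norm (K \<psi> + w))\<^sup>2 = (norm (K \<psi>))\<^sup>2 + (norm w)\<^sup>2"
proof -
  have "K (\<psi> + inv K w) = K \<psi> + w"
    using K_linear by (simp add: linear_add)
  then have inv_sum: "inv K (K \<psi> + w) = \<psi> + inv K w"
    by (metis inv_K_K)
  have "blinfun_apply (inv K w) (K \<psi>) = 0"
    using K_sym assms by (metis K_inv_K)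
  then have "(norm (K \<psi> + w))\<^sup>2 = blinfun_apply \<psi> (K \<psi>) + blinfun_apply (inv K w) w"
    using assms by (simp add: K_norm inv_sum plus_blinfun.rep_eq blinfun.add_right)
  also have "\<dots> = (norm (K \<psi>))\<^sup>2 + (norm w)\<^sup>2"
    by (simp add: K_norm)
  finally show ?thesis .
qed

end

locale gamblets = kernel_norm K
  for K :: "('u::real_normed_vector \<Rightarrow>\<^sub>L real) \<Rightarrow> 'u" +
  fixes I :: "'i set" and \<phi> :: "'i \<Rightarrow> ('u \<Rightarrow>\<^sub>L real)" and Thinv :: "'i \<Rightarrow> 'i \<Rightarrow> real"
  assumes finite_I: "finite I"
    and Thinv_Theta: "\<And>i j. i \<in> I \<Longrightarrow> j \<in> I \<Longrightarrow>
      (\<Sum>k\<in>I. Thinv i k * Theta K \<phi> k j) = (if i = j then 1 else 0)"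
begin

definition interpolant :: "('i \<Rightarrow> real) \<Rightarrow> 'u" where
  "interpolant z = (\<Sum>n\<in>I. z n *\<^sub>R gamblet I K \<phi> Thinv n)"

definition dual_coeffs :: "('i \<Rightarrow> real) \<Rightarrow> ('u \<Rightarrow>\<^sub>L real)" where
  "dual_coeffs z = (\<Sum>n\<in>I. \<Sum>k\<in>I. (z n * Thinv n k) *\<^sub>R \<phi> k)"

lemma interpolant_eq_K_dual_coeffs: "interpolant z = K (dual_coeffs z)"
  unfolding interpolant_def dual_coeffs_def gamblet_def
  by (simp add: linear_sum[OF K_linear] linear_scale[OF K_linear] scaleR_sum_right)

lemma blinfun_apply_interpolant:
  assumes "i \<in> I"
  shows "blinfun_apply (\<phi> i) (interpolant z) = z i"
proof -
  have "blinfun_apply (\<phi> i) (interpolant z) = blinfun_apply (dual_coeffs z) (K (\<phi> i))"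
    by (simp add: interpolant_eq_K_dual_coeffs K_sym)
  also have "\<dots> = (\<Sum>n\<in>I. z n * (\<Sum>k\<in>I. Thinv n k * Theta K \<phi> k i))"
    unfolding dual_coeffs_def Theta_def
    by (simp add: blinfun.sum_left blinfun.scaleR_left sum_distrib_left mult.assoc)
  also have "\<dots> = (\<Sum>n\<in>I. z n * (if n = i then 1 else 0))"
    using assms by (simp add: Thinv_Theta)
  also have "\<dots> = z i"
    using assms finite_I by (simp add: if_distrib cong: if_cong)
  finally show ?thesis .
qed

lemma norm_interpolant: "(norm (interpolant z))\<^sup>2 = quad_form I Thinv z"
proof -
  have "(norm (interpolant z))\<^sup>2 = blinfun_apply (dual_coeffs z) (interpolant z)"
    by (simp add: K_norm interpolant_eq_K_dual_coeffs)
  also have "\<dots> = (\<Sum>n\<in>I. \<Sum>k\<in>I. z n * Thinv n k * blinfun_apply (\<phi> k) (interpolant z))"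
    unfolding dual_coeffs_def by (simp add: blinfun.sum_left blinfun.scaleR_left)
  also have "\<dots> = quad_form I Thinv z"
    unfolding quad_form_def by (simp add: blinfun_apply_interpolant)
  finally show ?thesis .
qed

lemma norm_eq_quad_form_add_residual:
  "(norm u)\<^sup>2 = quad_form I Thinv (\<lambda>i. \<phi> i u) + (norm (u - interpolant (\<lambda>i. \<phi> i u)))\<^sup>2"
proof -
  let ?z = "\<lambda>i. blinfun_apply (\<phi> i) u"
  have "blinfun_apply (\<phi> k) (u - interpolant ?z) = 0" if "k \<in> I" for k
    using that by (simp add: blinfun_apply_interpolant blinfun.diff_right)
  then have "blinfun_apply (dual_coeffs ?z) (u - interpolant ?z) = 0"
    unfolding dual_coeffs_def by (simp add: blinfun.sum_left blinfun.scaleR_left)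
  from norm_K_add_orthogonal[OF this]
  have "(norm (interpolant ?z + (u - interpolant ?z)))\<^sup>2
      = (norm (interpolant ?z))\<^sup>2 + (norm (u - interpolant ?z))\<^sup>2"
    by (simp only: interpolant_eq_K_dual_coeffs)
  then show ?thesis
    by (simp add: norm_interpolant)
qed

lemma quad_form_measurements_le_norm: "quad_form I Thinv (\<lambda>i. \<phi> i u) \<le> (norm u)\<^sup>2"
  using norm_eq_quad_form_add_residual[of u] by simp

theorem min_norm_iff_min_quad_form:
  assumes C_cong: "\<And>z z'. (\<forall>i\<in>I. z i = z' i) \<Longrightarrow> C z = C z'"
  shows "(C (\<lambda>i. \<phi> i v) \<and> (\<forall>u. C (\<lambda>i. \<phi> i u) \<longrightarrow> norm v \<le> norm u)) \<longleftrightarrow>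
    (\<exists>z. C z \<and> (\<forall>z'. C z' \<longrightarrow> quad_form I Thinv z \<le> quad_form I Thinv z') \<and> v = interpolant z)"
proof -
  have C_interpolant: "C (\<lambda>i. \<phi> i (interpolant z)) = C z" for z
    by (rule C_cong) (simp add: blinfun_apply_interpolant)
  show ?thesis
  proof
    assume v: "C (\<lambda>i. \<phi> i v) \<and> (\<forall>u. C (\<lambda>i. \<phi> i u) \<longrightarrow> norm v \<le> norm u)"
    let ?z = "\<lambda>i. \<phi> i v"
    have norm_v_le: "(norm v)\<^sup>2 \<le> quad_form I Thinv z'" if "C z'" for z'
    proof -
      have "norm v \<le> norm (interpolant z')"
        using v that by (simp add: C_interpolant)
      then have "(norm v)\<^sup>2 \<le> (norm (interpolant z'))\<^sup>2"
        by (simp add: power_mono)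
      then show ?thesis
        by (simp only: norm_interpolant)
    qed
    have "(norm (v - interpolant ?z))\<^sup>2 \<le> 0"
      using norm_v_le[of ?z] v norm_eq_quad_form_add_residual[of v] by simp
    then have "v = interpolant ?z"
      by simp
    moreover have "quad_form I Thinv ?z \<le> quad_form I Thinv z'" if "C z'" for z'
      using norm_v_le[OF that] quad_form_measurements_le_norm[of v] by simp
    ultimately show
      "\<exists>z. C z \<and> (\<forall>z'. C z' \<longrightarrow> quad_form I Thinv z \<le> quad_form I Thinv z') \<and> v = interpolant z"
      using v by blast
  next
    assume "\<exists>z. C z \<and> (\<forall>z'. C z' \<longrightarrow> quad_form I Thinv z \<le> quad_form I Thinv z') \<and> v = interpolant z"
    then obtain z where z: "C z" "\<And>z'. C z' \<Longrightarrow> quad_form I Thinv z \<le> quad_form I Thinv z'"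
      and v: "v = interpolant z"
      by blast
    have "norm v \<le> norm u" if "C (\<lambda>i. \<phi> i u)" for u
    proof -
      have "(norm v)\<^sup>2 \<le> (norm u)\<^sup>2"
        using z(2)[OF that] quad_form_measurements_le_norm[of u] by (simp add: v norm_interpolant)
      then show ?thesis
        by (rule power2_le_imp_le) simp
    qed
    then show "C (\<lambda>i. \<phi> i v) \<and> (\<forall>u. C (\<lambda>i. \<phi> i u) \<longrightarrow> norm v \<le> norm u)"
      using z(1) by (simp add: v C_interpolant)
  qed
qed

end

lemma finite_colloc_idx: "finite (colloc_idx Q Qb M MO)"
proof -
  have "colloc_idx Q Qb M MO \<subseteq> {..max Q Qb} \<times> {..max M MO}"
    unfolding colloc_idx_def by auto
  then show ?thesis
    by (rule finite_subset) simp
qed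

lemma colloc_phi_apply:
  fixes L :: "nat \<Rightarrow> 'u::real_normed_vector \<Rightarrow> 'x \<Rightarrow> real"
  assumes qm: "(q, m) \<in> colloc_idx Q Qb M MO" and "Qb \<le> Q"
    and L_lin: "\<forall>q\<in>{1..Q}. \<forall>x. linear (\<lambda>u. L q u x)"
    and L_bdd: "\<forall>q\<in>{1..Q}. \<exists>C. \<forall>u. \<forall>x\<in>\<Omega>. \<bar>L q u x\<bar> \<le> C * norm u"
    and L_bdd_bd: "\<forall>q\<in>{1..Qb}. \<exists>C. \<forall>u. \<forall>x\<in>\<Gamma>. \<bar>L q u x\<bar> \<le> C * norm u"
    and X_int: "\<forall>m\<in>{1..MO}. X m \<in> \<Omega>"
    and X_bd: "\<forall>m\<in>{MO<..M}. X m \<in> \<Gamma>"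
  shows "blinfun_apply (colloc_phi L X (q, m)) u = L q u (X m)"
proof -
  have q: "q \<in> {1..Q}"
    using qm assms(2) by (auto simp: colloc_idx_def)
  obtain C where C: "\<And>u. \<bar>L q u (X m)\<bar> \<le> C * norm u"
  proof (cases "m \<le> MO")
    case True
    then have "X m \<in> \<Omega>"
      using X_int qm unfolding colloc_idx_def by auto
    then show ?thesis
      using L_bdd q that by blast
  next
    case False
    then have "X m \<in> \<Gamma>" "q \<in> {1..Qb}"
      using X_bd qm unfolding colloc_idx_def by auto
    then show ?thesis
      using L_bdd_bd that by blast
  qed
  have "bounded_linear (\<lambda>u. L q u (X m))"
    unfolding bounded_linear_def bounded_linear_axioms_def
    using L_lin q C by (metis mult.commute real_norm_def)
  then show ?thesis
    unfolding colloc_phi_def by (simp add: bounded_linear_Blinfun_apply)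
qed

lemma F_eq_y_cong:
  assumes "\<forall>i\<in>colloc_idx Q Qb M MO. z i = z' i"
  shows "F_eq_y P B Q Qb M MO y z = F_eq_y P B Q Qb M MO y z'"
proof -
  have "Fmap P B Q Qb MO z m = Fmap P B Q Qb MO z' m" if "m \<in> {1..M}" for m
    using that assms unfolding Fmap_def colloc_idx_def
    by (auto simp del: upt_Suc intro!: arg_cong[where f = P] arg_cong[where f = B])
      (metis leI less_Suc_eq_le)
  then show ?thesis
    unfolding F_eq_y_def by simp
qed

lemma collocation_constraints_iff_F_eq_y:
  assumes PP_def: "\<forall>x\<in>\<Omega>. PP u x = P (map (\<lambda>q. L q u x) [1..<Q+1])"
    and BB_def: "\<forall>x\<in>\<Gamma>. BB u x = B (map (\<lambda>q. L q u x) [1..<Qb+1])"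
    and "MO \<le> M"
    and X_int: "\<forall>m\<in>{1..MO}. X m \<in> \<Omega>"
    and X_bd: "\<forall>m\<in>{MO<..M}. X m \<in> \<Gamma>"
  shows "((\<forall>m\<in>{1..MO}. PP u (X m) = f (X m)) \<and> (\<forall>m\<in>{MO<..M}. BB u (X m) = g (X m)))
    \<longleftrightarrow> F_eq_y P B Q Qb M MO (ydata f g X MO) (\<lambda>(q, m). L q u (X m))"
proof -
  have "{1..M} = {1..MO} \<union> {MO<..M}"
    using \<open>MO \<le> M\<close> by auto
  then show ?thesis
    unfolding F_eq_y_def Fmap_def ydata_def using PP_def BB_def X_int X_bd
    by (auto simp del: upt_Suc)
qed

theorem corollary3p2:
  fixes K :: "('u::banach \<Rightarrow>\<^sub>L real) \<Rightarrow> 'u"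
    and \<Omega> :: "(real ^ 'd) set"
    and Q Qb M MO :: nat
    and L :: "nat \<Rightarrow> 'u \<Rightarrow> real ^ 'd \<Rightarrow> real"
    and P :: "real list \<Rightarrow> real" and B :: "real list \<Rightarrow> real"
    and PP BB :: "'u \<Rightarrow> real ^ 'd \<Rightarrow> real"
    and f g :: "real ^ 'd \<Rightarrow> real"
    and X :: "nat \<Rightarrow> real ^ 'd"
    and Thinv :: "nat \<times> nat \<Rightarrow> nat \<times> nat \<Rightarrow> real"
    and udag :: 'u
  assumes separable: "\<exists>D::'u set. countable D \<and> closure D = UNIV"
    and K_linear: "linear K" and K_bij: "bij K"
    and K_sym: "\<forall>\<phi> \<psi>. blinfun_apply \<phi> (K \<psi>) = blinfun_apply \<psi> (K \<phi>)"
    and K_pos: "\<forall>\<phi>. \<phi> \<noteq> 0 \<longrightarrow> blinfun_apply \<phi> (K \<phi>) > 0"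
    and K_norm: "\<forall>u. (norm u)\<^sup>2 = blinfun_apply (inv K u) u"
    and \<Omega>_bounded: "bounded \<Omega>"
    and Qb: "1 \<le> Qb" "Qb \<le> Q"
    and L_lin: "\<forall>q\<in>{1..Q}. \<forall>x. linear (\<lambda>u. L q u x)"
    and L_cont: "\<forall>q\<in>{1..Q}. \<forall>u. continuous_on \<Omega> (L q u)"
    and L_bdd: "\<forall>q\<in>{1..Q}. \<exists>C. \<forall>u. \<forall>x\<in>\<Omega>. \<bar>L q u x\<bar> \<le> C * norm u"
    and L_cont_bd: "\<forall>q\<in>{1..Qb}. \<forall>u. continuous_on (frontier \<Omega>) (L q u)"
    and L_bdd_bd: "\<forall>q\<in>{1..Qb}. \<exists>C. \<forall>u. \<forall>x\<in>frontier \<Omega>. \<bar>L q u x\<bar> \<le> C * norm u"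
    and PP_def: "\<forall>u. \<forall>x\<in>\<Omega>. PP u x = P (map (\<lambda>q. L q u x) [1..<Q+1])"
    and BB_def: "\<forall>u. \<forall>x\<in>frontier \<Omega>. BB u x = B (map (\<lambda>q. L q u x) [1..<Qb+1])"
    and MO_le: "MO \<le> M"
    and X_int: "\<forall>m\<in>{1..MO}. X m \<in> \<Omega>"
    and X_bd: "\<forall>m\<in>{MO<..M}. X m \<in> frontier \<Omega>"
    and Theta_inv_left: "\<forall>i\<in>colloc_idx Q Qb M MO. \<forall>j\<in>colloc_idx Q Qb M MO.
        (\<Sum>k\<in>colloc_idx Q Qb M MO. Thinv i k * Theta K (colloc_phi L X) k j) = (if i = j then 1 else 0)"
    and Theta_inv_right: "\<forall>i\<in>colloc_idx Q Qb M MO. \<forall>j\<in>colloc_idx Q Qb M MO.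
        (\<Sum>k\<in>colloc_idx Q Qb M MO. Theta K (colloc_phi L X) i k * Thinv k j) = (if i = j then 1 else 0)"
  shows "((\<forall>m\<in>{1..MO}. PP udag (X m) = f (X m)) \<and> (\<forall>m\<in>{MO<..M}. BB udag (X m) = g (X m)) \<and>
          (\<forall>u. (\<forall>m\<in>{1..MO}. PP u (X m) = f (X m)) \<and> (\<forall>m\<in>{MO<..M}. BB u (X m) = g (X m))
               \<longrightarrow> norm udag \<le> norm u))
     \<longleftrightarrow>
         (\<exists>z. F_eq_y P B Q Qb M MO (ydata f g X MO) z \<and>
              (\<forall>z'. F_eq_y P B Q Qb M MO (ydata f g X MO) z' \<longrightarrow>
                    quad_form (colloc_idx Q Qb M MO) Thinv z \<le> quad_form (colloc_idx Q Qb M MO) Thinv z') \<and>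
              udag = (\<Sum>n\<in>colloc_idx Q Qb M MO. z n *\<^sub>R gamblet (colloc_idx Q Qb M MO) K (colloc_phi L X) Thinv n))"
proof -
  let ?I = "colloc_idx Q Qb M MO" and ?\<phi> = "colloc_phi L X"
  let ?Fy = "F_eq_y P B Q Qb M MO (ydata f g X MO)"
  interpret kernel_norm K
    unfolding kernel_norm_def using K_linear K_bij K_sym K_norm by blast
  interpret gamblets K ?I ?\<phi> Thinv
    using Theta_inv_left finite_colloc_idx by unfold_locales auto
  have Fy_cong: "?Fy z = ?Fy z'" if "\<forall>i\<in>?I. z i = z' i" for z z'
    using that by (rule F_eq_y_cong)
  have constraints_iff: "((\<forall>m\<in>{1..MO}. PP u (X m) = f (X m)) \<and>
      (\<forall>m\<in>{MO<..M}. BB u (X m) = g (X m))) \<longleftrightarrow> ?Fy (\<lambda>i. ?\<phi> i u)" for u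
  proof -
    have "\<forall>i\<in>?I. (\<lambda>(q, m). L q u (X m)) i = ?\<phi> i u"
      using colloc_phi_apply[OF _ Qb(2) L_lin L_bdd L_bdd_bd X_int X_bd] by auto
    then have "?Fy (\<lambda>(q, m). L q u (X m)) = ?Fy (\<lambda>i. ?\<phi> i u)"
      by (rule Fy_cong)
    moreover have "((\<forall>m\<in>{1..MO}. PP u (X m) = f (X m)) \<and>
        (\<forall>m\<in>{MO<..M}. BB u (X m) = g (X m))) \<longleftrightarrow> ?Fy (\<lambda>(q, m). L q u (X m))"
      by (rule collocation_constraints_iff_F_eq_y[OF _ _ MO_le X_int X_bd])
        (use PP_def BB_def in blast)+
    ultimately show ?thesis
      by simp
  qed
  show ?thesis
    using min_norm_iff_min_quad_form[OF Fy_cong, where v = udag]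
    unfolding conj_assoc[symmetric] constraints_iff interpolant_def .
qed

end
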